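(* Let $n\geq 3$ and $m\geq 1$. The matching $\mu$ on the face poset of $\Delta_m^{n,2}$ has no critical cells of dimension $4$ or more.
   Context: $\Delta_m^{n,2}=\mathrm{VR}(\{0,\ldots,m\}^n;2)$, where $\{0,\ldots,m\}^n$ carries the Manhattan metric $d(x,y)=\sum_i|x_i-y_i|$ and $\mathrm{VR}(X;r)$ is the complex of finite subsets of diameter $\leq r$. Order the vertices as $v_1\prec\cdots\prec v_N$ ($N=(m+1)^n$) in the anti-lexicographic order ($x\prec y$ iff at the largest index $i$ with $x_i\neq y_i$, $x_i<y_i$). Let $T_0$ be the set of all simplices of $\Delta_m^{n,2}$, including the empty simplex. For $i=1,\ldots,N$ put $S_i=\{\sigma\in T_{i-1}: v_i\notin\sigma,\ \sigma\cup\{v_i\}\in T_{i-1}\}$, $\mu(\sigma)=\sigma\cup\{v_i\}$ for $\sigma\in S_i$, and $T_i=T_{i-1}\setminus(S_i\cup\{\sigma\cup\{v_i\}:\sigma\in S_i\})$. The critical cells of $\mu$ are the simplices in $T_N$; the dimension of a simplex is its cardinality minus one. *)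

theory Defs
  imports Main
begin

definition grid :: "nat \<Rightarrow> nat \<Rightarrow> nat list set" where
  "grid m n = {x. length x = n \<and> (\<forall>i<n. x ! i \<le> m)}"

definition manhattan :: "nat list \<Rightarrow> nat list \<Rightarrow> nat" where
  "manhattan x y = (\<Sum>i<length x. nat \<bar>int (x ! i) - int (y ! i)\<bar>)"

text \<open>Vietoris--Rips complex VR(X; r): all finite subsets (including the empty one)
  of diameter at most r.\<close>
definition vr_complex :: "nat list set \<Rightarrow> nat \<Rightarrow> nat list set set" where
  "vr_complex X r = {\<sigma>. \<sigma> \<subseteq> X \<and> finite \<sigma> \<and> (\<forall>x\<in>\<sigma>. \<forall>y\<in>\<sigma>. manhattan x y \<le> r)}"

definition antilex_less :: "nat list \<Rightarrow> nat list \<Rightarrow> bool" where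
  "antilex_less x y \<longleftrightarrow>
     (\<exists>i<length x. x ! i < y ! i \<and> (\<forall>j. i < j \<and> j < length x \<longrightarrow> x ! j = y ! j))"

definition match_S :: "'a set set \<Rightarrow> 'a \<Rightarrow> 'a set set" where
  "match_S T v = {\<sigma> \<in> T. v \<notin> \<sigma> \<and> insert v \<sigma> \<in> T}"

definition match_step :: "'a set set \<Rightarrow> 'a \<Rightarrow> 'a set set" where
  "match_step T v = T - (match_S T v \<union> (insert v) ` match_S T v)"

definition critical_cells :: "'a set set \<Rightarrow> 'a list \<Rightarrow> 'a set set" where
  "critical_cells T0 vs = foldl match_step T0 vs"

definition simplex_dim :: "'a set \<Rightarrow> int" where
  "simplex_dim \<sigma> = int (card \<sigma>) - 1"

end

theory Submission
  imports Defs "HOL-Library.Multiset"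
begin

(*
  Whatever the vertex order, a nonempty simplex \<sigma> is not critical as soon as the complex has
  the exchange property "if (\<sigma> - {w}) \<union> {u} is a simplex for some w \<in> \<sigma>, then so is
  \<sigma> \<union> {u}": let v be the first vertex for which \<sigma> \<union> {v} is a simplex.  If v \<notin> \<sigma>, then \<sigma> is
  matched with \<sigma> \<union> {v}; otherwise the exchange property keeps \<sigma> - {v} unmatched until v is
  processed, and \<sigma> is matched with \<sigma> - {v}.  So neither the order nor the bounds on m and n
  matter.

  For a simplex of VR(Z^n; 2) with at least five vertices the exchange property follows from:
  two points u, w at Manhattan distance at least 3 have at most three common neighbours (points
  within distance 2 of both) that are pairwise at distance at most 2.  Such a neighbour p lies
  in the box spanned by u and w, because d(u,p) + d(p,w) exceeds d(u,w) by twice the distance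
  from p to that box.  Encoding p by the multiset of coordinate steps from u to p turns the
  neighbours into submultisets of the step multiset Y of w, of size between |Y| - 2 and 2,
  with Manhattan distance becoming the size of the symmetric difference; a short case analysis
  bounds such families by 3.
*)

definition matching_stage :: "'a set set \<Rightarrow> 'a list \<Rightarrow> nat \<Rightarrow> 'a set set" where
  "matching_stage K vs k = foldl match_step K (take k vs)"

lemma matching_stage_0 [simp]: "matching_stage K vs 0 = K"
  by (simp add: matching_stage_def)

lemma matching_stage_Suc:
  "k < length vs \<Longrightarrow> matching_stage K vs (Suc k) = match_step (matching_stage K vs k) (vs ! k)"
  by (simp add: matching_stage_def take_Suc_conv_app_nth)

lemma matching_stage_antimono:
  assumes "k \<le> l"
  shows "matching_stage K vs l \<subseteq> matching_stage K vs k"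
  using assms
proof (induction l rule: dec_induct)
  case (step l)
  have "matching_stage K vs (Suc l) \<subseteq> matching_stage K vs l"
  proof (cases "l < length vs")
    case True
    then show ?thesis
      by (auto simp: matching_stage_Suc match_step_def)
  next
    case False
    then show ?thesis
      by (simp add: matching_stage_def)
  qed
  then show ?case
    using step.IH by blast
qed simp

lemma critical_cells_eq_matching_stage: "critical_cells K vs = matching_stage K vs (length vs)"
  by (simp add: critical_cells_def matching_stage_def)

lemma critical_cells_subset: "critical_cells K vs \<subseteq> K"
  using matching_stage_antimono[of 0 "length vs" K vs] by (simp add: critical_cells_eq_matching_stage)

lemma mem_matching_stage_if_unmatchable:
  assumes "\<rho> \<in> K" and "k \<le> length vs"
    and "\<And>j. j < k \<Longrightarrow> vs ! j \<notin> \<rho> \<and> insert (vs ! j) \<rho> \<notin> K"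
  shows "\<rho> \<in> matching_stage K vs k"
  using assms(2,3)
proof (induction k)
  case (Suc k)
  then have "\<rho> \<in> matching_stage K vs k" "vs ! k \<notin> \<rho>" "insert (vs ! k) \<rho> \<notin> K"
    by auto
  moreover have "matching_stage K vs k \<subseteq> K"
    using matching_stage_antimono[of 0 k K vs] by simp
  ultimately show ?case
    using Suc.prems(1) by (auto simp: matching_stage_Suc match_step_def match_S_def)
qed (simp add: assms(1))

lemma matched_not_critical:
  assumes "k < length vs" and "vs ! k \<notin> \<tau>"
    and "\<tau> \<in> matching_stage K vs k" "insert (vs ! k) \<tau> \<in> matching_stage K vs k"
  shows "\<tau> \<notin> critical_cells K vs" "insert (vs ! k) \<tau> \<notin> critical_cells K vs"
proof -
  have "\<tau> \<notin> matching_stage K vs (Suc k)" "insert (vs ! k) \<tau> \<notin> matching_stage K vs (Suc k)"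
    using assms by (auto simp: matching_stage_Suc match_step_def match_S_def)
  then show "\<tau> \<notin> critical_cells K vs" "insert (vs ! k) \<tau> \<notin> critical_cells K vs"
    using matching_stage_antimono[of "Suc k" "length vs" K vs] assms(1)
    by (auto simp: critical_cells_eq_matching_stage)
qed

theorem not_critical_if_exchange:
  assumes down: "\<And>\<tau> \<rho>. \<tau> \<in> K \<Longrightarrow> \<rho> \<subseteq> \<tau> \<Longrightarrow> \<rho> \<in> K" and "distinct vs"
    and \<sigma>: "\<sigma> \<in> K" "\<sigma> \<subseteq> set vs" "\<sigma> \<noteq> {}"
    and exchange: "\<And>u w. u \<in> set vs \<Longrightarrow> u \<notin> \<sigma> \<Longrightarrow> w \<in> \<sigma> \<Longrightarrow>
      insert u (\<sigma> - {w}) \<in> K \<Longrightarrow> insert u \<sigma> \<in> K"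
  shows "\<sigma> \<notin> critical_cells K vs"
proof -
  define i where "i = (LEAST i. i < length vs \<and> insert (vs ! i) \<sigma> \<in> K)"
  have "\<exists>i. i < length vs \<and> insert (vs ! i) \<sigma> \<in> K"
    using \<sigma> by (metis ex_in_conv in_set_conv_nth insert_absorb subsetD)
  then have i: "i < length vs" "insert (vs ! i) \<sigma> \<in> K"
    unfolding i_def by (metis (mono_tags, lifting) LeastI_ex)+
  have earlier: "vs ! j \<notin> \<sigma> \<and> insert (vs ! j) \<sigma> \<notin> K" if "j < i" for j
    using not_less_Least[OF that[unfolded i_def]] i(1) that \<sigma>(1) by (auto simp: insert_absorb)
  have \<sigma>_stage: "\<sigma> \<in> matching_stage K vs i"
    using \<sigma>(1) i(1) earlier by (intro mem_matching_stage_if_unmatchable) auto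
  show ?thesis
  proof (cases "vs ! i \<in> \<sigma>")
    case False
    have "insert (vs ! i) \<sigma> \<in> matching_stage K vs i"
    proof (rule mem_matching_stage_if_unmatchable[OF i(2)])
      fix j assume "j < i"
      then have "vs ! j \<noteq> vs ! i"
        using \<open>distinct vs\<close> i(1) by (simp add: nth_eq_iff_index_eq)
      then show "vs ! j \<notin> insert (vs ! i) \<sigma> \<and> insert (vs ! j) (insert (vs ! i) \<sigma>) \<notin> K"
        using earlier[OF \<open>j < i\<close>] down by blast
    qed (use i in simp)
    then show ?thesis
      using matched_not_critical(1)[OF i(1) False \<sigma>_stage] by blast
  next
    case True
    define \<tau> where "\<tau> = \<sigma> - {vs ! i}"
    have "\<tau> \<in> matching_stage K vs i"
    proof (rule mem_matching_stage_if_unmatchable)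
      show "\<tau> \<in> K"
        using down \<sigma>(1) \<tau>_def by blast
      fix j assume "j < i"
      then have "vs ! j \<in> set vs"
        using i(1) by simp
      then show "vs ! j \<notin> \<tau> \<and> insert (vs ! j) \<tau> \<notin> K"
        using exchange[of "vs ! j" "vs ! i"] earlier[OF \<open>j < i\<close>] True unfolding \<tau>_def by blast
    qed (use i in simp)
    moreover have "insert (vs ! i) \<tau> = \<sigma>" "vs ! i \<notin> \<tau>"
      using True \<tau>_def by auto
    ultimately show ?thesis
      using matched_not_critical(2)[OF i(1)] \<sigma>_stage by metis
  qed
qed

definition mset_dist :: "'a multiset \<Rightarrow> 'a multiset \<Rightarrow> nat" where
  "mset_dist A B = size (A - B) + size (B - A)"

lemma mset_dist_self [simp]: "mset_dist A A = 0"
  by (simp add: mset_dist_def)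

lemma mset_dist_commute: "mset_dist A B = mset_dist B A"
  by (simp add: mset_dist_def)

lemma mset_dist_add_mset_both [simp]: "mset_dist (add_mset x A) (add_mset x B) = mset_dist A B"
  by (simp add: mset_dist_def)

lemma size_2_msetE:
  assumes "size A = 2"
  obtains x y where "A = {#x, y#}"
  using assms by (metis Suc_1 multiset_cases nat.inject nat.simps(3)
    size_1_singleton_mset size_add_mset size_empty)

lemma size_2_mset_memberE:
  assumes "size A = 2" and "a \<in># A"
  obtains b where "A = {#a, b#}"
proof -
  have "size (A - {#a#}) = 1"
    using assms by (simp add: size_Diff_singleton)
  then obtain b where "A - {#a#} = {#b#}"
    using size_1_singleton_mset by blast
  then show thesis
    using that assms(2) by (metis insert_DiffM)
qed

lemma mset_dist_single_pair_le_2: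
  "mset_dist {#x#} {#y, z#} \<le> 2 \<Longrightarrow> x = y \<or> x = z"
  by (cases "x = y \<or> x = z") (auto simp: mset_dist_def)

lemma mset_dist_pairs_le_2_iff:
  "mset_dist {#x, y#} {#z, t#} \<le> 2 \<longleftrightarrow> x = z \<or> x = t \<or> y = z \<or> y = t"
proof
  assume "mset_dist {#x, y#} {#z, t#} \<le> 2"
  then show "x = z \<or> x = t \<or> y = z \<or> y = t"
    by (cases "x = z \<or> x = t \<or> y = z \<or> y = t") (auto simp: mset_dist_def)
next
  have shared: "mset_dist {#a, b#} {#a, c#} \<le> 2" for a b c :: 'a
    by (cases "b = c") (auto simp: mset_dist_def)
  assume "x = z \<or> x = t \<or> y = z \<or> y = t"
  then show "mset_dist {#x, y#} {#z, t#} \<le> 2"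
    by (metis shared add_mset_commute)
qed

lemma mset_pair_eq_iff:
  "{#x, y#} = {#z, t#} \<longleftrightarrow> x = z \<and> y = t \<or> x = t \<and> y = z"
  by (metis add_eq_conv_ex add_mset_eq_single)

lemma size_2_submset_close_to_two_pairs:
  assumes "size C = 2" and "C \<subseteq># {#a, b, c, d#}" and "b \<noteq> c" and "C \<notin> {{#a, b#}, {#a, c#}}"
    and "mset_dist {#a, b#} C \<le> 2" and "mset_dist {#a, c#} C \<le> 2"
  shows "C \<in> {{#a, d#}, {#b, c#}}"
proof -
  have "C \<in> {{#a, b#}, {#a, c#}, {#a, d#}, {#b, c#}, {#b, d#}, {#c, d#}}"
    using assms(1,2) by (elim size_2_msetE) (auto simp: insert_subset_eq_iff add_mset_commute)
  then show ?thesis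
    using assms(3-) by (auto simp: mset_dist_pairs_le_2_iff mset_pair_eq_iff)
qed

lemma close_pairs_in_size_4E:
  assumes Y: "size Y = 4" and A: "A \<subseteq># Y" "size A = 2" and B: "B \<subseteq># Y" "size B = 2"
    and "A \<noteq> B" and "mset_dist A B \<le> 2"
  obtains a b c d where "A = {#a, b#}" "B = {#a, c#}" "b \<noteq> c" "Y = {#a, b, c, d#}"
proof -
  obtain a where "a \<in># A" "a \<in># B"
    using A(2) B(2) \<open>mset_dist A B \<le> 2\<close>
    by (elim size_2_msetE) (auto simp: mset_dist_pairs_le_2_iff)
  then obtain b c where A_eq: "A = {#a, b#}" and B_eq: "B = {#a, c#}"
    using A(2) B(2) by (metis size_2_mset_memberE)
  have "b \<noteq> c"
    using \<open>A \<noteq> B\<close> A_eq B_eq by auto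
  then have abc: "{#a, b, c#} \<subseteq># Y"
    using A(1) B(1) unfolding A_eq B_eq subseteq_mset_def by (metis count_add_mset)
  have "size (Y - {#a, b, c#}) = 1"
    using abc Y by (simp add: size_Diff_submset)
  then obtain d where "Y - {#a, b, c#} = {#d#}"
    using size_1_singleton_mset by blast
  moreover have "Y = {#a, b, c#} + (Y - {#a, b, c#})"
    using subset_mset.add_diff_inverse[OF abc] by simp
  ultimately show thesis
    using that A_eq B_eq \<open>b \<noteq> c\<close> by simp
qed

lemma card_close_pairs_in_size_4_le_3:
  assumes Y: "size Y = 4" and F: "\<And>A. A \<in> F \<Longrightarrow> A \<subseteq># Y \<and> size A = 2"
    and close: "pairwise (\<lambda>A B. mset_dist A B \<le> 2) F"
  shows "card F \<le> 3"
proof (cases "\<exists>A\<in>F. \<exists>B\<in>F. A \<noteq> B")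
  case False
  then obtain A where "F \<subseteq> {A}"
    by blast
  then show ?thesis
    using card_mono[of "{A}" F] by simp
next
  case True
  then obtain A B where AB: "A \<in> F" "B \<in> F" "A \<noteq> B"
    by blast
  then have "mset_dist A B \<le> 2"
    using close by (auto simp: pairwise_def)
  then obtain a b c d where A: "A = {#a, b#}" and B: "B = {#a, c#}" and "b \<noteq> c"
    and Y_eq: "Y = {#a, b, c, d#}"
    using close_pairs_in_size_4E[OF Y] F[OF AB(1)] F[OF AB(2)] AB(3) by metis
  have "F - {A, B} \<subseteq> {{#a, d#}, {#b, c#}}"
  proof
    fix C assume C: "C \<in> F - {A, B}"
    then have "mset_dist A C \<le> 2" "mset_dist B C \<le> 2"
      using close AB by (auto simp: pairwise_def)
    then show "C \<in> {{#a, d#}, {#b, c#}}"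
      using F[of C] C \<open>b \<noteq> c\<close> unfolding A B Y_eq
      by (intro size_2_submset_close_to_two_pairs) auto
  qed
  moreover have "{#a, d#} \<notin> F - {A, B} \<or> {#b, c#} \<notin> F - {A, B} \<or> {#a, d#} = {#b, c#}"
  proof (rule ccontr)
    assume "\<not> ?thesis"
    then have "mset_dist {#a, d#} {#b, c#} \<le> 2" "{#a, d#} \<notin> {A, B}" "{#b, c#} \<notin> {A, B}"
      using close by (auto simp: pairwise_def)
    then show False
      using \<open>b \<noteq> c\<close> unfolding A B by (auto simp: mset_dist_pairs_le_2_iff mset_pair_eq_iff)
  qed
  ultimately obtain C where "F - {A, B} \<subseteq> {C}"
    by blast
  then have "card (F - {A, B}) \<le> 1"
    using card_mono[of "{C}"] by simp
  moreover have "F = {A, B} \<union> (F - {A, B})" and "card {A, B} = 2"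
    using AB by auto
  ultimately show ?thesis
    using card_Un_le[of "{A, B}" "F - {A, B}"] by simp
qed

lemma mset_dist_pad_single_pair_le_2:
  assumes "size A = 1" and "size B = 2" and "mset_dist A B \<le> 2"
  shows "mset_dist (add_mset z A) B \<le> 2"
proof -
  obtain x where A: "A = {#x#}"
    using assms(1) size_1_singleton_mset by blast
  obtain y t where B: "B = {#y, t#}"
    using assms(2) size_2_msetE by blast
  have "x = y \<or> x = t"
    using assms(3) unfolding A B by (rule mset_dist_single_pair_le_2)
  then show ?thesis
    unfolding A B by (auto simp: mset_dist_pairs_le_2_iff)
qed

lemma card_close_submsets_of_size_3_le_3:
  assumes "size Y = 3" and "z \<notin># Y"
    and F: "\<And>A. A \<in> F \<Longrightarrow> A \<subseteq># Y \<and> (size A = 1 \<or> size A = 2)"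
    and close: "pairwise (\<lambda>A B. mset_dist A B \<le> 2) F"
  shows "card F \<le> 3"
proof -
  \<comment> \<open>Padding the singletons with the fresh element z embeds F into the
    2-submultisets of Y + {z}.\<close>
  define pad where "pad A = (if size A = 1 then add_mset z A else A)" for A
  have "pad A \<subseteq># add_mset z Y \<and> size (pad A) = 2" if "A \<in> F" for A
    using F[OF that] unfolding pad_def by (auto intro: subset_mset.order_trans)
  moreover have "pairwise (\<lambda>A B. mset_dist A B \<le> 2) (pad ` F)"
  proof (rule pairwise_imageI)
    fix A B assume "A \<in> F" "B \<in> F" "A \<noteq> B"
    then have "mset_dist A B \<le> 2"
      using close by (auto simp: pairwise_def)
    then show "mset_dist (pad A) (pad B) \<le> 2"
      using F[OF \<open>A \<in> F\<close>] F[OF \<open>B \<in> F\<close>]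
        mset_dist_pad_single_pair_le_2[of A B z] mset_dist_pad_single_pair_le_2[of B A z]
      by (auto simp: pad_def mset_dist_commute)
  qed
  ultimately have "card (pad ` F) \<le> 3"
    using \<open>size Y = 3\<close> by (intro card_close_pairs_in_size_4_le_3[of "add_mset z Y"]) auto
  moreover have "inj_on pad F"
  proof
    fix A B assume "A \<in> F" "B \<in> F" "pad A = pad B"
    moreover have "z \<notin># C" if "C \<in> F" for C
      using F[OF that] \<open>z \<notin># Y\<close> by (meson mset_subset_eqD)
    ultimately show "A = B"
      using F unfolding pad_def by (metis add_mset_remove_trivial union_single_eq_member)
  qed
  ultimately show ?thesis
    by (simp add: card_image)
qed

lemma card_close_submsets_le_3:
  fixes Y :: "'a multiset"
  assumes "infinite (UNIV :: 'a set)" and Y: "3 \<le> size Y"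
    and F: "\<And>A. A \<in> F \<Longrightarrow> A \<subseteq># Y \<and> size A \<le> 2 \<and> size Y \<le> size A + 2"
    and close: "pairwise (\<lambda>A B. mset_dist A B \<le> 2) F"
  shows "card F \<le> 3"
proof -
  consider "F = {}" | "size Y = 4" | "size Y = 3"
  proof (cases "F = {}")
    case False
    then obtain A where "A \<in> F"
      by blast
    then have "size Y \<le> 4"
      using F[of A] by linarith
    then show thesis
      using that Y by linarith
  qed
  then show ?thesis
  proof cases
    case 1
    then show ?thesis
      by simp
  next
    case 2
    then show ?thesis
      using card_close_pairs_in_size_4_le_3[OF 2 _ close] F by fastforce
  next
    case 3
    obtain z where "z \<notin># Y"
      using ex_new_if_finite[OF assms(1) finite_set_mset] by blast
    then show ?thesis
      using card_close_submsets_of_size_3_le_3[OF 3 _ _ close] F 3 by fastforce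
  qed
qed

definition absdiff :: "nat \<Rightarrow> nat \<Rightarrow> nat" where
  "absdiff a b = (a - b) + (b - a)"

lemma absdiff_detour:
  "absdiff a p + absdiff p b = absdiff a b + 2 * ((p - max a b) + (min a b - p))"
  unfolding absdiff_def by (cases "a \<le> b"; cases "a \<le> p"; cases "p \<le> b"; simp)

lemma absdiff_absdiff_between:
  assumes "min a b \<le> p" "p \<le> max a b" "min a b \<le> q" "q \<le> max a b"
  shows "absdiff (absdiff a p) (absdiff a q) = absdiff p q"
  using assms unfolding absdiff_def by (cases "a \<le> b") auto

lemma manhattan_eq_sum_absdiff:
  "length x = n \<Longrightarrow> manhattan x y = (\<Sum>i<n. absdiff (x ! i) (y ! i))"
  unfolding manhattan_def absdiff_def by (auto intro!: sum.cong)

lemma manhattan_commute: "length x = length y \<Longrightarrow> manhattan x y = manhattan y x"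
  by (simp add: manhattan_eq_sum_absdiff absdiff_def add.commute)

lemma manhattan_self [simp]: "manhattan x x = 0"
  by (simp add: manhattan_def)

lemma manhattan_eq_0_iff:
  assumes "length x = length y"
  shows "manhattan x y = 0 \<longleftrightarrow> x = y"
proof
  assume "manhattan x y = 0"
  then have "\<forall>i<length x. absdiff (x ! i) (y ! i) = 0"
    by (simp add: manhattan_eq_sum_absdiff)
  then show "x = y"
    using assms by (auto simp: absdiff_def intro!: nth_equalityI)
qed simp

definition dist_to_box :: "nat list \<Rightarrow> nat list \<Rightarrow> nat list \<Rightarrow> nat" where
  "dist_to_box u w p = (\<Sum>i<length u. (p ! i - max (u ! i) (w ! i)) + (min (u ! i) (w ! i) - p ! i))"

lemma manhattan_detour:
  assumes "length p = length u"
  shows "manhattan u p + manhattan p w = manhattan u w + 2 * dist_to_box u w p"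
proof -
  have "manhattan u p + manhattan p w = (\<Sum>i<length u. absdiff (u ! i) (p ! i) + absdiff (p ! i) (w ! i))"
    using assms by (simp add: manhattan_eq_sum_absdiff sum.distrib)
  also have "\<dots> = (\<Sum>i<length u. absdiff (u ! i) (w ! i)
      + 2 * ((p ! i - max (u ! i) (w ! i)) + (min (u ! i) (w ! i) - p ! i)))"
    by (rule sum.cong) (simp_all only: absdiff_detour)
  also have "\<dots> = manhattan u w + 2 * dist_to_box u w p"
    by (simp add: manhattan_eq_sum_absdiff dist_to_box_def sum.distrib sum_distrib_left distrib_left)
  finally show ?thesis .
qed

definition in_box :: "nat list \<Rightarrow> nat list \<Rightarrow> nat list \<Rightarrow> bool" where
  "in_box u w p \<longleftrightarrow> length p = length u \<and>
     (\<forall>i<length u. min (u ! i) (w ! i) \<le> p ! i \<and> p ! i \<le> max (u ! i) (w ! i))"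

lemma in_box_iff_dist_to_box: "in_box u w p \<longleftrightarrow> length p = length u \<and> dist_to_box u w p = 0"
  by (auto simp: in_box_def dist_to_box_def)

lemma in_box_iff_manhattan_le:
  "in_box u w p \<longleftrightarrow> length p = length u \<and> manhattan u p + manhattan p w \<le> manhattan u w + 1"
  using manhattan_detour[of p u w] by (auto simp: in_box_iff_dist_to_box)

lemma manhattan_add_eq_if_in_box:
  "in_box u w p \<Longrightarrow> manhattan u p + manhattan p w = manhattan u w"
  by (simp add: in_box_iff_dist_to_box manhattan_detour)

lemma count_sum_replicate_mset:
  "count (\<Sum>i<n::nat. replicate_mset (f i) i) j = (if j < n then f j else 0)"
  by (induction n) auto

lemma size_sum_replicate_mset: "size (\<Sum>i<n::nat. replicate_mset (f i) i) = (\<Sum>i<n. f i)"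
  by (induction n) auto

lemma sum_replicate_mset_diff:
  "(\<Sum>i<n::nat. replicate_mset (f i) i) - (\<Sum>i<n. replicate_mset (g i) i)
     = (\<Sum>i<n. replicate_mset (f i - g i) i)"
  by (rule multiset_eqI) (simp add: count_sum_replicate_mset)

definition unit_steps :: "nat list \<Rightarrow> nat list \<Rightarrow> nat multiset" where
  "unit_steps u p = (\<Sum>i<length u. replicate_mset (absdiff (u ! i) (p ! i)) i)"

lemma size_unit_steps: "size (unit_steps u p) = manhattan u p"
  by (simp add: unit_steps_def size_sum_replicate_mset manhattan_eq_sum_absdiff)

lemma unit_steps_subset_if_in_box: "in_box u w p \<Longrightarrow> unit_steps u p \<subseteq># unit_steps u w"
  by (auto simp: subseteq_mset_def unit_steps_def count_sum_replicate_mset in_box_def absdiff_def)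

lemma mset_dist_unit_steps:
  assumes "in_box u w p" and "in_box u w q"
  shows "mset_dist (unit_steps u p) (unit_steps u q) = manhattan p q"
proof -
  have "mset_dist (unit_steps u p) (unit_steps u q)
      = (\<Sum>i<length u. absdiff (absdiff (u ! i) (p ! i)) (absdiff (u ! i) (q ! i)))"
    unfolding mset_dist_def unit_steps_def
    by (simp add: sum_replicate_mset_diff size_sum_replicate_mset sum.distrib absdiff_def)
  also have "\<dots> = (\<Sum>i<length u. absdiff (p ! i) (q ! i))"
    using assms by (intro sum.cong refl absdiff_absdiff_between) (auto simp: in_box_def)
  also have "\<dots> = manhattan p q"
    using assms(1) by (simp add: in_box_def manhattan_eq_sum_absdiff)
  finally show ?thesis .
qed

lemma card_common_close_points_le_3:
  assumes uw: "length w = length u" "3 \<le> manhattan u w"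
    and P: "\<And>p. p \<in> P \<Longrightarrow> length p = length u \<and> manhattan u p \<le> 2 \<and> manhattan p w \<le> 2"
    and close: "\<And>p q. p \<in> P \<Longrightarrow> q \<in> P \<Longrightarrow> manhattan p q \<le> 2"
  shows "card P \<le> 3"
proof -
  have box: "in_box u w p" if "p \<in> P" for p
    using P[OF that] uw(2) by (simp add: in_box_iff_manhattan_le)
  have "inj_on (unit_steps u) P"
  proof
    fix p q assume "p \<in> P" "q \<in> P" and same_steps: "unit_steps u p = unit_steps u q"
    have "manhattan p q = mset_dist (unit_steps u p) (unit_steps u q)"
      using mset_dist_unit_steps[OF box box] \<open>p \<in> P\<close> \<open>q \<in> P\<close> by simp
    then have "manhattan p q = 0"
      using same_steps by simp
    then show "p = q"
      using P \<open>p \<in> P\<close> \<open>q \<in> P\<close> by (simp add: manhattan_eq_0_iff)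
  qed
  moreover have "card (unit_steps u ` P) \<le> 3"
  proof (rule card_close_submsets_le_3)
    show "3 \<le> size (unit_steps u w)"
      using uw by (simp add: size_unit_steps)
    show "A \<subseteq># unit_steps u w \<and> size A \<le> 2 \<and> size (unit_steps u w) \<le> size A + 2"
      if "A \<in> unit_steps u ` P" for A
      using that P box manhattan_add_eq_if_in_box
      by (fastforce simp: size_unit_steps unit_steps_subset_if_in_box)
    show "pairwise (\<lambda>A B. mset_dist A B \<le> 2) (unit_steps u ` P)"
      by (intro pairwise_imageI) (simp add: mset_dist_unit_steps[OF box box] close)
  qed simp
  ultimately show ?thesis
    by (simp add: card_image)
qed

lemma vr_complex_downward_closed: "\<tau> \<in> vr_complex X r \<Longrightarrow> \<rho> \<subseteq> \<tau> \<Longrightarrow> \<rho> \<in> vr_complex X r"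
  unfolding vr_complex_def by (auto intro: finite_subset)

lemma vr_complex_exchange:
  assumes X: "\<And>x. x \<in> X \<Longrightarrow> length x = n"
    and \<sigma>: "\<sigma> \<in> vr_complex X 2" "5 \<le> card \<sigma>" and "w \<in> \<sigma>" and "u \<in> X"
    and exchanged: "insert u (\<sigma> - {w}) \<in> vr_complex X 2"
  shows "insert u \<sigma> \<in> vr_complex X 2"
proof -
  have \<sigma>X: "\<sigma> \<subseteq> X" and "finite \<sigma>" and close: "\<forall>x\<in>\<sigma>. \<forall>y\<in>\<sigma>. manhattan x y \<le> 2"
    using \<sigma>(1) by (auto simp: vr_complex_def)
  have close_u: "\<forall>x\<in>insert u (\<sigma> - {w}). \<forall>y\<in>insert u (\<sigma> - {w}). manhattan x y \<le> 2"
    using exchanged by (simp add: vr_complex_def)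
  have lengths: "length u = n" "length w = n"
    using X \<open>u \<in> X\<close> \<open>w \<in> \<sigma>\<close> \<sigma>X by auto
  have "card (\<sigma> - {w}) \<le> 3" if "3 \<le> manhattan u w"
  proof (rule card_common_close_points_le_3[OF _ that])
    show "length w = length u"
      using lengths by simp
    show "length p = length u \<and> manhattan u p \<le> 2 \<and> manhattan p w \<le> 2" if "p \<in> \<sigma> - {w}" for p
      using that lengths X[of p] \<sigma>X close close_u \<open>w \<in> \<sigma>\<close> by auto
    show "manhattan p q \<le> 2" if "p \<in> \<sigma> - {w}" "q \<in> \<sigma> - {w}" for p q
      using that close by auto
  qed
  moreover have "card (\<sigma> - {w}) \<ge> 4"
    using \<sigma>(2) \<open>w \<in> \<sigma>\<close> \<open>finite \<sigma>\<close> by simp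
  ultimately have "manhattan u w \<le> 2"
    by linarith
  moreover have "manhattan w u \<le> 2"
    using calculation manhattan_commute[of w u] lengths by simp
  ultimately show ?thesis
    using \<sigma>X \<open>u \<in> X\<close> \<open>finite \<sigma>\<close> close close_u unfolding vr_complex_def by auto
qed

theorem lemma4p10:
  fixes m n :: nat and vs :: "nat list list"
  assumes "n \<ge> 3" and "m \<ge> 1"
    and "set vs = grid m n" and "distinct vs" and "sorted_wrt antilex_less vs"
  shows "\<forall>\<sigma> \<in> critical_cells (vr_complex (grid m n) 2) vs. simplex_dim \<sigma> < 4"
proof
  let ?K = "vr_complex (grid m n) 2"
  fix \<sigma> assume critical: "\<sigma> \<in> critical_cells ?K vs"
  then have "\<sigma> \<in> ?K"
    using critical_cells_subset by blast
  have lengths: "length x = n" if "x \<in> grid m n" for x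
    using that by (simp add: grid_def)
  have "\<not> 5 \<le> card \<sigma>"
  proof
    assume "5 \<le> card \<sigma>"
    have "\<sigma> \<notin> critical_cells ?K vs"
    proof (rule not_critical_if_exchange[OF vr_complex_downward_closed \<open>distinct vs\<close> \<open>\<sigma> \<in> ?K\<close>])
      show "\<sigma> \<subseteq> set vs" "\<sigma> \<noteq> {}"
        using \<open>\<sigma> \<in> ?K\<close> \<open>5 \<le> card \<sigma>\<close> assms(3) by (auto simp: vr_complex_def)
      show "insert u \<sigma> \<in> ?K" if "u \<in> set vs" "w \<in> \<sigma>" "insert u (\<sigma> - {w}) \<in> ?K" for u w
        using vr_complex_exchange[OF lengths \<open>\<sigma> \<in> ?K\<close> \<open>5 \<le> card \<sigma>\<close>] that assms(3) by blast
    qed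
    then show False
      using critical by contradiction
  qed
  then show "simplex_dim \<sigma> < 4"
    by (simp add: simplex_dim_def)
qed

end
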